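(* Let $S$ be a quartic K3 surface ($H$ very ample, $H^2=4$) and let $\tau_q\colon N(S)\to N(S)$ be the map $$\tau_q(r,\Delta,s)=(-r-2s-\Delta\cdot H,\ (r+s+\Delta\cdot H)H-\Delta,\ -2r-s-\Delta\cdot H).$$ Then $\omega=\tfrac12H$, $\beta=-\tfrac12H$ is the only pair $(\omega,\beta)$ of classes in $\mathrm{NS}(S)_{\mathbb Q}$ with $\omega$ ample such that $Z_{\omega,\beta}(r,\Delta,s)=Z_{\omega,\beta}(\tau_q(r,\Delta,s))$ for every $(r,\Delta,s)\in N(S)$.
   Context: $N(S)=H^0(S,\mathbb Z)\oplus\mathrm{NS}(S)\oplus H^4(S,\mathbb Z)$, elements written $(r,\Delta,s)$. For $\omega,\beta\in\mathrm{NS}(S)_{\mathbb Q}$, $Z_{\omega,\beta}(r,\Delta,s)=\tfrac12(2\beta\cdot\Delta-2s+r(\omega^2-\beta^2))+\sqrt{-1}(\Delta-r\beta)\cdot\omega$. ($\tau_q$ is the Hodge isometry induced by the autoequivalence $\mathsf T_{\mathcal O_S}\circ(-\otimes\mathcal O_S(H))\circ\mathsf T_{\mathcal O_S}\circ(-\otimes\mathcal O_S(H))[-1]$.) *)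

theory Defs
  imports Complex_Main
begin

text \<open>Model of NS(S): NS(S) = Z^'n (a free abelian group with basis indexed by the finite
type 'n), with intersection form given by the integer Gram matrix G.  NS(S)_Q = Q^'n.\<close>

definition bilQ :: "('n::finite \<Rightarrow> 'n \<Rightarrow> int) \<Rightarrow> ('n \<Rightarrow> rat) \<Rightarrow> ('n \<Rightarrow> rat) \<Rightarrow> rat" where
  "bilQ G x y = (\<Sum>i\<in>UNIV. \<Sum>j\<in>UNIV. x i * of_int (G i j) * y j)"

definition bilZ :: "('n::finite \<Rightarrow> 'n \<Rightarrow> int) \<Rightarrow> ('n \<Rightarrow> int) \<Rightarrow> ('n \<Rightarrow> int) \<Rightarrow> int" where
  "bilZ G x y = (\<Sum>i\<in>UNIV. \<Sum>j\<in>UNIV. x i * G i j * y j)"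

definition toQ :: "('n \<Rightarrow> int) \<Rightarrow> ('n \<Rightarrow> rat)" where
  "toQ x = (\<lambda>i. of_int (x i))"

text \<open>Ampleness of a Q-class via Nakai--Moishezon, relative to the set of classes of
irreducible curves on S.\<close>
definition ampleQ :: "('n::finite \<Rightarrow> 'n \<Rightarrow> int) \<Rightarrow> ('n \<Rightarrow> int) set \<Rightarrow> ('n \<Rightarrow> rat) \<Rightarrow> bool" where
  "ampleQ G Curves w \<longleftrightarrow> bilQ G w w > 0 \<and> (\<forall>C\<in>Curves. bilQ G w (toQ C) > 0)"

text \<open>Elements (r, Delta, s) of the Mukai lattice N(S) = H^0 + NS(S) + H^4.\<close>
type_synonym 'n mukai = "int \<times> ('n \<Rightarrow> int) \<times> int"

definition tau_q :: "('n::finite \<Rightarrow> 'n \<Rightarrow> int) \<Rightarrow> ('n \<Rightarrow> int) \<Rightarrow> 'n mukai \<Rightarrow> 'n mukai" where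
  "tau_q G H v = (case v of (r, D, s) \<Rightarrow>
     (- r - 2 * s - bilZ G D H,
      (\<lambda>i. (r + s + bilZ G D H) * H i - D i),
      - 2 * r - s - bilZ G D H))"

definition Zstab :: "('n::finite \<Rightarrow> 'n \<Rightarrow> int) \<Rightarrow> ('n \<Rightarrow> rat) \<Rightarrow> ('n \<Rightarrow> rat) \<Rightarrow> 'n mukai \<Rightarrow> complex" where
  "Zstab G w b v = (case v of (r, D, s) \<Rightarrow>
     Complex
       (real_of_rat ((2 * bilQ G b (toQ D) - 2 * of_int s
                      + of_int r * (bilQ G w w - bilQ G b b)) / 2))
       (real_of_rat (bilQ G (\<lambda>i. toQ D i - of_int r * b i) w)))"

end

theory Submission
  imports Defs
begin

text \<open>Testing \<open>\<tau>\<^sub>q\<close>-invariance of \<open>Z\<^sub>\<omega>\<^sub>,\<^sub>\<beta>\<close> on the vectors \<open>(0,\<Delta>,0)\<close> shows, through the imaginary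
  and the real part, that \<open>\<Delta> \<mapsto> \<Delta>\<cdot>\<omega>\<close> and \<open>\<Delta> \<mapsto> \<Delta>\<cdot>\<beta>\<close> are multiples of \<open>\<Delta> \<mapsto> \<Delta>\<cdot>H\<close>; by
  nondegeneracy \<open>\<omega> = c\<^sub>1H\<close> and \<open>\<beta> = c\<^sub>2H\<close>.  Invariance at \<open>(1,0,0)\<close> then gives
  \<open>c\<^sub>1(1 + 2c\<^sub>2) = 0\<close> and \<open>4c\<^sub>1\<^sup>2 - 4c\<^sub>2\<^sup>2 = 4c\<^sub>2 + 2\<close>, and \<open>\<omega>\<cdot>H > 0\<close> forces \<open>c\<^sub>1 = 1/2\<close>,
  \<open>c\<^sub>2 = -1/2\<close>.  Evenness, the Hodge index theorem,
  the rank bound and the bound on self-intersections of curves are not needed.\<close>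

lemma bilQ_add_left: "bilQ G (\<lambda>i. x i + y i) z = bilQ G x z + bilQ G y z"
  by (simp add: bilQ_def algebra_simps sum.distrib)

lemma bilQ_diff_left: "bilQ G (\<lambda>i. x i - y i) z = bilQ G x z - bilQ G y z"
  by (simp add: bilQ_def algebra_simps sum_subtractf)

lemma bilQ_scale_left: "bilQ G (\<lambda>i. c * x i) z = c * bilQ G x z"
  by (simp add: bilQ_def algebra_simps sum_distrib_left)

lemma bilQ_add_right: "bilQ G z (\<lambda>i. x i + y i) = bilQ G z x + bilQ G z y"
  by (simp add: bilQ_def algebra_simps sum.distrib)

lemma bilQ_diff_right: "bilQ G z (\<lambda>i. x i - y i) = bilQ G z x - bilQ G z y"
  by (simp add: bilQ_def algebra_simps sum_subtractf)

lemma bilQ_scale_right: "bilQ G z (\<lambda>i. c * x i) = c * bilQ G z x"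
  by (simp add: bilQ_def algebra_simps sum_distrib_left)

lemma bilQ_minus_left: "bilQ G (\<lambda>i. - x i) z = - bilQ G x z"
  by (simp add: bilQ_def sum_negf)

lemma bilQ_minus_right: "bilQ G z (\<lambda>i. - x i) = - bilQ G z x"
  by (simp add: bilQ_def sum_negf)

lemmas bilQ_linear =
  bilQ_add_left bilQ_diff_left bilQ_scale_left bilQ_minus_left
  bilQ_add_right bilQ_diff_right bilQ_scale_right bilQ_minus_right

lemma bilQ_commute:
  assumes "\<And>i j. G i j = G j i"
  shows "bilQ G x y = bilQ G y x"
  unfolding bilQ_def by (subst sum.swap) (simp add: assms mult.commute mult.left_commute)

lemma bilQ_toQ_toQ: "bilQ G (toQ x) (toQ y) = of_int (bilZ G x y)"
  by (simp add: bilQ_def bilZ_def toQ_def)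

lemma bilZ_zero_left [simp]: "bilZ G (\<lambda>i. 0) y = 0"
  by (simp add: bilZ_def)

lemma toQ_zero [simp]: "toQ (\<lambda>i. 0) = (\<lambda>i. 0)"
  by (simp add: toQ_def)

lemma bilQ_zero_left [simp]: "bilQ G (\<lambda>i. 0) y = 0"
  and bilQ_zero_right [simp]: "bilQ G x (\<lambda>i. 0) = 0"
  by (simp_all add: bilQ_def)

lemma toQ_scale_diff: "toQ (\<lambda>i. a * x i - y i) = (\<lambda>i. of_int a * toQ x i - toQ y i)"
  by (simp add: toQ_def)

lemma bilQ_nondegenerate:
  fixes G :: "'n::finite \<Rightarrow> 'n \<Rightarrow> int"
  assumes nondeg: "\<And>x. (\<forall>y. bilZ G x y = 0) \<Longrightarrow> \<forall>i. x i = 0"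
    and orth: "\<And>y. bilQ G u (toQ y) = 0"
  shows "u = (\<lambda>i. 0)"
proof -
  define n where "n i = fst (quotient_of (u i))" for i
  define d where "d i = snd (quotient_of (u i))" for i
  have d_pos: "d i > 0" for i
    unfolding d_def by (rule quotient_of_denom_pos')
  have u_eq: "u i = of_int (n i) / of_int (d i)" for i
    unfolding n_def d_def by (rule quotient_of_div) simp
  define N where "N = (\<Prod>j\<in>UNIV. d j)"
  define m where "m i = n i * (\<Prod>j\<in>UNIV-{i}. d j)" for i
  have N_pos: "N > 0"
    unfolding N_def using d_pos by (simp add: prod_pos)
  have m_eq: "of_int (m i) = of_int N * u i" for i
  proof -
    have "N = d i * (\<Prod>j\<in>UNIV-{i}. d j)"
      unfolding N_def by (simp add: prod.remove)
    then show ?thesis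
      using d_pos[of i] by (simp add: m_def u_eq field_simps)
  qed
  have "bilZ G m y = 0" for y
  proof -
    have "of_int (bilZ G m y) = bilQ G (\<lambda>i. of_int N * u i) (toQ y)"
      by (simp add: bilQ_toQ_toQ[symmetric] toQ_def m_eq)
    also have "\<dots> = 0"
      by (simp add: bilQ_scale_left orth)
    finally show ?thesis by simp
  qed
  then have "\<forall>i. m i = 0"
    using nondeg by blast
  then show ?thesis
    using m_eq N_pos by (auto simp: fun_eq_iff)
qed

lemma bilQ_proportional_on_lattice:
  fixes G :: "'n::finite \<Rightarrow> 'n \<Rightarrow> int"
  assumes sym: "\<And>i j. G i j = G j i"
    and nondeg: "\<And>x. (\<forall>y. bilZ G x y = 0) \<Longrightarrow> \<forall>i. x i = 0"
    and proportional: "\<And>y. bilQ G (toQ y) u = c * bilQ G (toQ y) v"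
  shows "u = (\<lambda>i. c * v i)"
proof -
  have "(\<lambda>i. u i - c * v i) = (\<lambda>i. 0)"
  proof (rule bilQ_nondegenerate[OF nondeg])
    fix y
    show "bilQ G (\<lambda>i. u i - c * v i) (toQ y) = 0"
      using proportional[of y] by (simp add: bilQ_linear bilQ_commute[of G _ "toQ y", OF sym])
  qed
  then show ?thesis
    by (auto simp: fun_eq_iff)
qed

lemma ampleQ_scale:
  assumes "ampleQ G Curves w" and "c > 0"
  shows "ampleQ G Curves (\<lambda>i. c * w i)"
  using assms by (simp add: ampleQ_def bilQ_linear)

lemma tau_q_invariant_at_divisor:
  assumes sym: "\<And>i j. G i j = G j i"
    and inv: "Zstab G w b (0, D, 0) = Zstab G w b (tau_q G H (0, D, 0))"
  shows "2 * bilQ G (toQ D) w = of_int (bilZ G D H) * (bilQ G (toQ H) w + bilQ G b w)"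
    and "4 * bilQ G (toQ D) b
           = of_int (bilZ G D H) * (2 * bilQ G b (toQ H) + 2 - (bilQ G w w - bilQ G b b))"
  using inv bilQ_commute[of G b "toQ D", OF sym]
  unfolding Zstab_def tau_q_def prod.case
  by (simp_all only: toQ_scale_diff bilQ_linear bilQ_toQ_toQ) (simp_all add: algebra_simps)

lemma tau_q_invariant_at_rank_one:
  assumes "Zstab G w b (1, (\<lambda>i. 0), 0) = Zstab G w b (tau_q G H (1, (\<lambda>i. 0), 0))"
  shows "bilQ G (toQ H) w + 2 * bilQ G b w = 0"
    and "bilQ G w w - bilQ G b b = bilQ G b (toQ H) + 2"
  using assms
  unfolding Zstab_def tau_q_def prod.case
  by (simp_all only: toQ_scale_diff bilQ_linear) (simp_all add: field_simps)

lemma tau_q_invariant_imp_half_H: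
  fixes G :: "'n::finite \<Rightarrow> 'n \<Rightarrow> int"
  assumes sym: "\<And>i j. G i j = G j i"
    and nondeg: "\<And>x. (\<forall>y. bilZ G x y = 0) \<Longrightarrow> \<forall>i. x i = 0"
    and H_sq: "bilZ G H H = 4"
    and inv: "\<And>v. Zstab G w b v = Zstab G w b (tau_q G H v)"
    and w_H_pos: "bilQ G w (toQ H) > 0"
  shows "w = (\<lambda>i. (1/2) * toQ H i)" and "b = (\<lambda>i. - (1/2) * toQ H i)"
proof -
  define h where "h = toQ H"
  have h_sq: "bilQ G h h = 4"
    unfolding h_def using H_sq by (simp add: bilQ_toQ_toQ)
  define c\<^sub>1 where "c\<^sub>1 = (bilQ G h w + bilQ G b w) / 2"
  define c\<^sub>2 where "c\<^sub>2 = (2 * bilQ G b h + 2 - (bilQ G w w - bilQ G b b)) / 4"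
  have w_eq: "w = (\<lambda>i. c\<^sub>1 * h i)"
  proof (rule bilQ_proportional_on_lattice[OF sym nondeg])
    fix D
    show "bilQ G (toQ D) w = c\<^sub>1 * bilQ G (toQ D) h"
      using tau_q_invariant_at_divisor(1)[OF sym inv, of D]
      by (simp add: h_def c\<^sub>1_def bilQ_toQ_toQ algebra_simps)
  qed
  have b_eq: "b = (\<lambda>i. c\<^sub>2 * h i)"
  proof (rule bilQ_proportional_on_lattice[OF sym nondeg])
    fix D
    show "bilQ G (toQ D) b = c\<^sub>2 * bilQ G (toQ D) h"
      using tau_q_invariant_at_divisor(2)[OF sym inv, of D]
      by (simp add: h_def c\<^sub>2_def bilQ_toQ_toQ algebra_simps)
  qed
  have c\<^sub>1_pos: "c\<^sub>1 > 0"
    using w_H_pos unfolding w_eq h_def[symmetric] by (simp add: bilQ_linear h_sq)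
  have "c\<^sub>1 * (1 + 2 * c\<^sub>2) = 0"
    using tau_q_invariant_at_rank_one(1)[OF inv]
    unfolding w_eq b_eq h_def[symmetric] by (simp only: bilQ_linear h_sq) (simp add: algebra_simps)
  then have c\<^sub>2_eq: "c\<^sub>2 = - 1/2"
    using c\<^sub>1_pos by simp
  have "(c\<^sub>1 - 1/2) * (c\<^sub>1 + 1/2) = 0"
    using tau_q_invariant_at_rank_one(2)[OF inv]
    unfolding w_eq b_eq h_def[symmetric]
    by (simp only: bilQ_linear h_sq) (simp add: c\<^sub>2_eq algebra_simps)
  then have c\<^sub>1_eq: "c\<^sub>1 = 1/2"
    using c\<^sub>1_pos by auto
  show "w = (\<lambda>i. (1/2) * toQ H i)" and "b = (\<lambda>i. - (1/2) * toQ H i)"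
    using w_eq b_eq c\<^sub>1_eq c\<^sub>2_eq by (simp_all add: h_def)
qed

lemma Zstab_half_H_tau_q_invariant:
  assumes sym: "\<And>i j. G i j = G j i"
    and H_sq: "bilZ G H H = 4"
  shows "Zstab G (\<lambda>i. (1/2) * toQ H i) (\<lambda>i. - (1/2) * toQ H i) v
           = Zstab G (\<lambda>i. (1/2) * toQ H i) (\<lambda>i. - (1/2) * toQ H i) (tau_q G H v)"
proof -
  obtain r D s where v: "v = (r, D, s)"
    by (cases v) auto
  have h_sq: "bilQ G (toQ H) (toQ H) = 4"
    using H_sq by (simp add: bilQ_toQ_toQ)
  show ?thesis
    using bilQ_commute[of G "toQ H" "toQ D", OF sym]
    unfolding v Zstab_def tau_q_def prod.case toQ_scale_diff
    by (simp only: bilQ_linear h_sq bilQ_toQ_toQ) (simp add: H_sq algebra_simps)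
qed

theorem proposition5p2:
  fixes G :: "'n::finite \<Rightarrow> 'n \<Rightarrow> int"
    and Curves :: "('n \<Rightarrow> int) set"
    and H :: "'n \<Rightarrow> int"
  assumes sym: "\<And>i j. G i j = G j i"
    and even: "\<And>x. even (bilZ G x x)"
    and nondeg: "\<And>x. (\<forall>y. bilZ G x y = 0) \<Longrightarrow> \<forall>i. x i = 0"
    and hodge_index: "\<And>x. bilZ G H x = 0 \<Longrightarrow> \<exists>i. x i \<noteq> 0 \<Longrightarrow> bilZ G x x < 0"
    and rank: "card (UNIV :: 'n set) \<le> 20"
    and curves_sq: "\<And>C. C \<in> Curves \<Longrightarrow> bilZ G C C \<ge> -2"
    and H_curve: "H \<in> Curves"
    and H_ample: "ampleQ G Curves (toQ H)"
    and H_sq: "bilZ G H H = 4"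
  shows "\<forall>w b. (ampleQ G Curves w \<and> (\<forall>v. Zstab G w b v = Zstab G w b (tau_q G H v)))
           \<longleftrightarrow> (w = (\<lambda>i. (1/2) * toQ H i) \<and> b = (\<lambda>i. - (1/2) * toQ H i))"
proof (intro allI iffI)
  fix w b
  assume "ampleQ G Curves w \<and> (\<forall>v. Zstab G w b v = Zstab G w b (tau_q G H v))"
  moreover from this have "bilQ G w (toQ H) > 0"
    using H_curve by (simp add: ampleQ_def)
  ultimately show "w = (\<lambda>i. (1/2) * toQ H i) \<and> b = (\<lambda>i. - (1/2) * toQ H i)"
    using tau_q_invariant_imp_half_H[OF sym nondeg H_sq] by blast
next
  fix w b :: "'n \<Rightarrow> rat"
  assume "w = (\<lambda>i. (1/2) * toQ H i) \<and> b = (\<lambda>i. - (1/2) * toQ H i)"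
  then show "ampleQ G Curves w \<and> (\<forall>v. Zstab G w b v = Zstab G w b (tau_q G H v))"
    using ampleQ_scale[OF H_ample, of "1/2"] Zstab_half_H_tau_q_invariant[OF sym H_sq] by simp
qed

end
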